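(* Let $\alpha\in(0,1)$ and let $U_i,U_i^0$, $i\in[m]$, be real numbers. Define $G_i=\mathrm{sign}(U_i^0-U_i)\cdot[\exp(-U_i)\vee\exp(-U_i^0)]$, $$\tau=\inf\Big\{\lambda\in\{|G_i|\}_{i=1}^m:\frac{1+\sum_{i=1}^m\mathbb{I}(G_i\le-\lambda)}{\sum_{i=1}^m\mathbb{I}(G_i\ge\lambda)}\le\alpha\Big\}$$ (with $\tau=\infty$ if the set is empty), $\mathcal{R}=\{i\in[m]:G_i\ge\tau\}$, and $e_i=\frac{m\,\mathbb{I}(G_i\ge\tau)}{1+\sum_{j=1}^m\mathbb{I}(G_j\le-\tau)}$. Let $e_{(1)}\ge\cdots\ge e_{(m)}$ be the order statistics of the $e_i$, $\hat k=\max\{i:ie_{(i)}/m\ge1/\alpha\}$, and $\mathcal{R}_{ebh}=\{i\in[m]:e_i\ge e_{(\hat k)}\}$ (the $e$-BH rejection set). Then $\mathcal{R}_{ebh}=\mathcal{R}$. *)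

theory Defs
  imports "HOL-Analysis.Analysis" "HOL-Library.Extended_Real"
begin

definition knock_G :: "(nat \<Rightarrow> real) \<Rightarrow> (nat \<Rightarrow> real) \<Rightarrow> nat \<Rightarrow> real" where
  "knock_G U U0 i = sgn (U0 i - U i) * max (exp (- U i)) (exp (- U0 i))"

text \<open>Threshold; the ratio (1 + N_minus)/N_plus \<le> alpha is read with the convention
  that a positive number divided by 0 is +infinity, i.e. as
  1 + N_minus \<le> alpha * N_plus. Inf of the empty set of ereals is +infinity.\<close>
definition knock_tau :: "real \<Rightarrow> nat \<Rightarrow> (nat \<Rightarrow> real) \<Rightarrow> ereal" where
  "knock_tau alpha m G = Inf {ereal \<bar>G i\<bar> | i. i \<in> {1..m} \<and>
      1 + real (card {j \<in> {1..m}. G j \<le> - \<bar>G i\<bar>})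
        \<le> alpha * real (card {j \<in> {1..m}. G j \<ge> \<bar>G i\<bar>})}"

definition knock_R :: "real \<Rightarrow> nat \<Rightarrow> (nat \<Rightarrow> real) \<Rightarrow> nat set" where
  "knock_R alpha m G = {i \<in> {1..m}. ereal (G i) \<ge> knock_tau alpha m G}"

definition knock_e :: "real \<Rightarrow> nat \<Rightarrow> (nat \<Rightarrow> real) \<Rightarrow> nat \<Rightarrow> real" where
  "knock_e alpha m G i =
     real m * (if ereal (G i) \<ge> knock_tau alpha m G then 1 else 0)
     / (1 + real (card {j \<in> {1..m}. ereal (G j) \<le> - knock_tau alpha m G}))"

text \<open>Order statistics e_(1) \<ge> ... \<ge> e_(m): e_(k) is the k-th largest (1-based).\<close>
definition order_stat_desc :: "nat \<Rightarrow> (nat \<Rightarrow> real) \<Rightarrow> nat \<Rightarrow> real" where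
  "order_stat_desc m e k = rev (sort (map e [1..<m+1])) ! (k - 1)"

definition eBH :: "real \<Rightarrow> nat \<Rightarrow> (nat \<Rightarrow> real) \<Rightarrow> nat set" where
  "eBH alpha m e =
    (let K = {k \<in> {1..m}. real k * order_stat_desc m e k / real m \<ge> 1 / alpha}
     in if K = {} then {}
        else {i \<in> {1..m}. e i \<ge> order_stat_desc m e (Max K)})"

end

theory Submission
  imports Defs "HOL-Library.Multiset"
begin

text \<open>The knockoff e-values take only two values: \<open>m / (1 + N)\<close> on \<open>\<R>\<close>, where \<open>N\<close> counts the
  \<open>G\<^sub>j \<le> -\<tau>\<close>, and \<open>0\<close> elsewhere. Applied to such a vector, e-BH rejects either nothing or
  exactly the indices carrying the top value, and it rejects them iff
  \<open>|\<R>| \<cdot> (m / (1 + N)) / m \<ge> 1 / \<alpha>\<close>, i.e. \<open>(1 + N) / |\<R>| \<le> \<alpha>\<close>. When \<open>\<R>\<close> is nonempty, \<open>\<tau>\<close> is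
  finite, so the infimum defining it is attained, and this inequality is precisely the condition
  selecting \<open>\<tau>\<close>.\<close>

lemma order_stat_desc_two_valued:
  fixes e :: "nat \<Rightarrow> real"
  assumes e: "\<And>i. e i = (if P i then c else d)" and "d \<le> c" and "1 \<le> k" "k \<le> m"
  shows "order_stat_desc m e k = (if k \<le> card {i \<in> {1..m}. P i} then c else d)"
proof -
  define xs where "xs = [1..<m+1]"
  define r where "r = length (filter P xs)"
  have r_card: "r = card {i \<in> {1..m}. P i}"
    unfolding r_def xs_def by (subst distinct_length_filter) (auto intro: arg_cong[where f=card])
  have "length xs = m"
    by (simp add: xs_def)
  then have len_compl: "length (filter (\<lambda>x. \<not> P x) xs) = m - r" and "r \<le> m"
    using sum_length_filter_compl[of P xs] by (simp_all add: r_def)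
  have "map e (filter P xs) = replicate r c"
    by (simp add: e r_def map_replicate_const[symmetric] cong: map_cong)
  moreover have "map e (filter (\<lambda>x. \<not> P x) xs) = replicate (m - r) d"
    by (simp add: e len_compl[symmetric] map_replicate_const[symmetric] cong: map_cong)
  moreover have "mset (map e xs) =
      mset (map e (filter P xs)) + mset (map e (filter (\<lambda>x. \<not> P x) xs))"
    by (metis image_mset_union multiset_partition mset_filter mset_map)
  ultimately have "mset (map e xs) = mset (replicate (m - r) d @ replicate r c)"
    by (simp add: add.commute)
  then have "sort (map e xs) = replicate (m - r) d @ replicate r c"
    using \<open>d \<le> c\<close> by (intro properties_for_sort) (auto simp: sorted_append)
  then have "rev (sort (map e xs)) = replicate r c @ replicate (m - r) d"
    by simp
  with \<open>r \<le> m\<close> assms(3,4) show ?thesis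
    unfolding order_stat_desc_def xs_def[symmetric] r_card[symmetric]
    by (auto simp: nth_append)
qed

lemma eBH_two_valued:
  fixes c :: real
  assumes "0 < alpha" and "0 \<le> c"
  shows "eBH alpha m (\<lambda>i. if P i then c else 0) =
    (if 1 / alpha \<le> real (card {i \<in> {1..m}. P i}) * c / real m
     then {i \<in> {1..m}. P i} else {})"
proof -
  define e where "e i = (if P i then c else 0)" for i
  define r where "r = card {i \<in> {1..m}. P i}"
  define K where "K = {k \<in> {1..m}. real k * order_stat_desc m e k / real m \<ge> 1 / alpha}"
  have os: "order_stat_desc m e k = (if k \<le> r then c else 0)" if "1 \<le> k" "k \<le> m" for k
    using order_stat_desc_two_valued[OF e_def \<open>0 \<le> c\<close> that] by (simp add: r_def)
  have "r \<le> m"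
    unfolding r_def by (rule order_trans[OF card_mono[of "{1..m}"]]) auto
  have K_le_r: "k \<le> r" if "k \<in> K" for k
  proof (rule ccontr)
    assume "\<not> k \<le> r"
    with that os[of k] \<open>0 < alpha\<close> show False by (auto simp: K_def)
  qed
  show ?thesis
  proof (cases "1 / alpha \<le> real r * c / real m")
    case True
    have "0 < real r * c / real m"
      using True \<open>0 < alpha\<close> by (meson less_le_trans zero_less_divide_1_iff)
    then have "1 \<le> r" "0 < c"
      using \<open>0 \<le> c\<close> by (auto simp: zero_less_divide_iff zero_less_mult_iff)
    then have "r \<in> K"
      using True os[of r] \<open>r \<le> m\<close> by (simp add: K_def)
    then have "Max K = r"
      using K_le_r by (intro Max_eqI) (auto intro: finite_subset[of K "{1..m}"] simp: K_def)
    with \<open>r \<in> K\<close> \<open>1 \<le> r\<close> \<open>r \<le> m\<close> \<open>0 < c\<close> True show ?thesis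
      unfolding eBH_def Let_def K_def[symmetric] e_def[symmetric] r_def[symmetric]
      by (auto simp: os e_def)
  next
    case False
    have "K = {}"
    proof (intro equals0I)
      fix k assume "k \<in> K"
      then have "1 / alpha \<le> real k * c / real m" "1 \<le> k" "k \<le> m"
        using K_le_r os[of k] by (auto simp: K_def)
      moreover have "real k * c / real m \<le> real r * c / real m"
        using K_le_r[OF \<open>k \<in> K\<close>] \<open>0 \<le> c\<close> by (simp add: divide_right_mono mult_right_mono)
      ultimately show False using False by linarith
    qed
    with False show ?thesis
      unfolding eBH_def Let_def K_def[symmetric] e_def[symmetric] r_def[symmetric] by simp
  qed
qed

lemma knock_e_two_valued:
  "knock_e alpha m G = (\<lambda>i. if ereal (G i) \<ge> knock_tau alpha m G
     then real m / (1 + real (card {j \<in> {1..m}. ereal (G j) \<le> - knock_tau alpha m G})) else 0)"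
  by (auto simp: knock_e_def)

lemma knock_tau_attained:
  assumes "knock_tau alpha m G \<noteq> \<infinity>"
  obtains i where "i \<in> {1..m}" and "knock_tau alpha m G = ereal \<bar>G i\<bar>"
    and "1 + real (card {j \<in> {1..m}. G j \<le> - \<bar>G i\<bar>})
           \<le> alpha * real (card {j \<in> {1..m}. G j \<ge> \<bar>G i\<bar>})"
proof -
  define S where "S = {ereal \<bar>G i\<bar> | i. i \<in> {1..m} \<and>
      1 + real (card {j \<in> {1..m}. G j \<le> - \<bar>G i\<bar>})
        \<le> alpha * real (card {j \<in> {1..m}. G j \<ge> \<bar>G i\<bar>})}"
  have tau: "knock_tau alpha m G = Inf S"
    unfolding knock_tau_def S_def ..
  with assms have "S \<noteq> {}"
    by (auto simp: top_ereal_def)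
  moreover have "finite S"
    by (rule finite_subset[of _ "(\<lambda>i. ereal \<bar>G i\<bar>) ` {1..m}"]) (auto simp: S_def)
  ultimately have "Inf S \<in> S"
    by (intro finite_Inf_in) (auto simp: inf_min min_def)
  with that show ?thesis
    unfolding tau S_def by blast
qed

lemma knock_R_estimated_fdp_le:
  assumes "knock_R alpha m G \<noteq> {}"
  shows "1 + real (card {j \<in> {1..m}. ereal (G j) \<le> - knock_tau alpha m G})
    \<le> alpha * real (card (knock_R alpha m G))"
proof -
  have "knock_tau alpha m G \<noteq> \<infinity>"
    using assms by (auto simp: knock_R_def)
  then obtain i where "knock_tau alpha m G = ereal \<bar>G i\<bar>"
    and "1 + real (card {j \<in> {1..m}. G j \<le> - \<bar>G i\<bar>})
           \<le> alpha * real (card {j \<in> {1..m}. G j \<ge> \<bar>G i\<bar>})"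
    by (rule knock_tau_attained)
  then show ?thesis
    by (simp add: knock_R_def)
qed

theorem proposition3:
  fixes alpha :: real and m :: nat and U U0 :: "nat \<Rightarrow> real"
  assumes "0 < alpha" and "alpha < 1"
  defines "G \<equiv> knock_G U U0"
  shows "eBH alpha m (knock_e alpha m G) = knock_R alpha m G"
proof -
  define R where "R = knock_R alpha m G"
  define N where "N = card {j \<in> {1..m}. ereal (G j) \<le> - knock_tau alpha m G}"
  have R_eq: "{i \<in> {1..m}. ereal (G i) \<ge> knock_tau alpha m G} = R"
    by (simp add: R_def knock_R_def)
  have "eBH alpha m (knock_e alpha m G) =
      (if 1 / alpha \<le> real (card R) * (real m / (1 + real N)) / real m then R else {})"
    unfolding knock_e_two_valued N_def[symmetric]
    by (subst eBH_two_valued) (use \<open>0 < alpha\<close> R_eq in auto)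
  moreover have "1 / alpha \<le> real (card R) * (real m / (1 + real N)) / real m" if "R \<noteq> {}"
  proof -
    have "1 + real N \<le> alpha * real (card R)"
      using knock_R_estimated_fdp_le that by (simp add: R_def N_def)
    then have "1 / alpha \<le> real (card R) / (1 + real N)"
      using \<open>0 < alpha\<close> by (simp add: field_simps)
    moreover have "0 < m"
      using that by (auto simp: R_def knock_R_def)
    ultimately show ?thesis
      by simp
  qed
  ultimately show ?thesis
    unfolding R_def[symmetric] by (cases "R = {}") auto
qed

end
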